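(* Let $\mu>0$, $T_s>0$, $T_w>0$ and $\sigma_{\mathrm{off}}\in[0,1)$. Define for $\rho\in(0,1)$ the function $f(\rho)=\dfrac{e^{-\mu\rho T_s}}{\mu\rho}$ and let $b=T_s+T_w$. Then $f''(\rho)\bigl(f(\rho)+b\bigr)\ge 2\bigl(f'(\rho)\bigr)^2$ for all $\rho\in(0,1)$; consequently the function $E(\rho)=1-(1-\sigma_{\mathrm{off}})(1-\rho)\dfrac{f(\rho)}{f(\rho)+T_s+T_w}$ is concave on $(0,1)$.
   Context: This is the normalized energy consumption $E(\rho)$ of an Energy Efficient Ethernet link at normalized load $\rho$ under the "frame transmission" policy with Poisson packet arrivals, where $f(\rho)$ is the mean time spent in the low-power state, $\mu^{-1}$ the mean packet transmission time, $T_s$, $T_w$ the sleep and wake transition times, and $\sigma_{\mathrm{off}}$ the relative power in the idle state. *)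

theory Defs
  imports "HOL-Analysis.Analysis"
begin

definition eee_f :: "real \<Rightarrow> real \<Rightarrow> real \<Rightarrow> real" where
  "eee_f mu Ts rho = exp (- mu * rho * Ts) / (mu * rho)"

definition eee_E :: "real \<Rightarrow> real \<Rightarrow> real \<Rightarrow> real \<Rightarrow> real \<Rightarrow> real" where
  "eee_E mu Ts Tw soff rho =
     1 - (1 - soff) * (1 - rho) * (eee_f mu Ts rho / (eee_f mu Ts rho + Ts + Tw))"

end

theory Submission
  imports Defs
begin

text \<open>
  Writing \<open>u = \<mu> T\<^sub>s + 1/\<rho>\<close> and \<open>v = 1/\<rho>\<close>, one has \<open>f' = -f u\<close> and \<open>f'' = f (u\<^sup>2 + v\<^sup>2)\<close>,
  so the differential inequality reduces to \<open>f (u\<^sup>2 - v\<^sup>2) \<le> b (u\<^sup>2 + v\<^sup>2)\<close>; with \<open>x = \<mu> \<rho> T\<^sub>s\<close>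
  this is \<open>T\<^sub>s e\<^sup>-\<^sup>x (x + 2) \<le> b (x\<^sup>2 + 2x + 2)\<close>. For any positive decreasing \<open>g\<close> the inequality
  \<open>g'' (g + b) \<ge> 2 g'\<^sup>2\<close> says exactly that \<open>g / (g + b)\<close> is convex, since its second derivative
  is \<open>b (g'' (g + b) - 2 g'\<^sup>2) / (g + b)\<^sup>3\<close>, and it is also decreasing;
  multiplying a convex decreasing function by the positive decreasing linear factor \<open>1 - \<rho>\<close>
  keeps it convex, which gives concavity of \<open>E\<close>.
\<close>

lemma eee_f_pos: "mu > 0 \<Longrightarrow> rho > 0 \<Longrightarrow> eee_f mu Ts rho > 0"
  by (simp add: eee_f_def)

lemma eee_f_has_real_derivative:
  assumes "mu > 0" "rho > 0"
  shows "(eee_f mu Ts has_real_derivative - eee_f mu Ts rho * (mu * Ts + 1 / rho)) (at rho)"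
proof -
  have "((\<lambda>r. exp (- mu * r * Ts) / (mu * r)) has_real_derivative
      (exp (- mu * rho * Ts) * (- mu * Ts) * (mu * rho) - exp (- mu * rho * Ts) * mu)
        / ((mu * rho) * (mu * rho))) (at rho)"
    using assms by (auto intro!: derivative_eq_intros)
  moreover have "(exp (- mu * rho * Ts) * (- mu * Ts) * (mu * rho) - exp (- mu * rho * Ts) * mu)
        / ((mu * rho) * (mu * rho)) = - eee_f mu Ts rho * (mu * Ts + 1 / rho)"
    using assms by (simp add: eee_f_def field_simps)
  ultimately show ?thesis
    by (simp add: eee_f_def [abs_def])
qed

lemma eee_f_deriv_has_real_derivative:
  assumes "mu > 0" "rho > 0"
  shows "((\<lambda>r. - eee_f mu Ts r * (mu * Ts + 1 / r)) has_real_derivative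
           eee_f mu Ts rho * ((mu * Ts + 1 / rho)\<^sup>2 + (1 / rho)\<^sup>2)) (at rho)"
proof -
  have "((\<lambda>r. - eee_f mu Ts r * (mu * Ts + 1 / r)) has_real_derivative
      - (- eee_f mu Ts rho * (mu * Ts + 1 / rho)) * (mu * Ts + 1 / rho)
        - eee_f mu Ts rho * (- 1 / rho\<^sup>2)) (at rho)"
    using assms eee_f_has_real_derivative [OF assms]
    by (auto intro!: derivative_eq_intros simp: power2_eq_square)
  then show ?thesis
    by (simp add: algebra_simps power2_eq_square)
qed

lemma eee_f_mult_diff_squares_le:
  assumes "mu > 0" "Ts > 0" "rho > 0"
  shows "eee_f mu Ts rho * ((mu * Ts + 1 / rho)\<^sup>2 - (1 / rho)\<^sup>2)
           \<le> Ts * ((mu * Ts + 1 / rho)\<^sup>2 + (1 / rho)\<^sup>2)"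
proof -
  define x where "x = mu * Ts * rho"
  have "x > 0"
    using assms by (simp add: x_def)
  then have "exp (- x) * (x + 2) \<le> x + 2"
    by (intro mult_left_le_one_le) auto
  also have "\<dots> \<le> x\<^sup>2 + 2 * x + 2"
    using \<open>x > 0\<close> by (simp add: power2_eq_square)
  finally have "exp (- x) * (x + 2) \<le> x\<^sup>2 + 2 * x + 2" .
  moreover have "eee_f mu Ts rho * ((mu * Ts + 1 / rho)\<^sup>2 - (1 / rho)\<^sup>2)
      = Ts * (exp (- x) * (x + 2)) / rho\<^sup>2"
    using assms by (simp add: eee_f_def x_def field_simps power2_eq_square)
  moreover have "Ts * ((mu * Ts + 1 / rho)\<^sup>2 + (1 / rho)\<^sup>2) = Ts * (x\<^sup>2 + 2 * x + 2) / rho\<^sup>2"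
    using assms by (simp add: x_def field_simps power2_eq_square)
  ultimately show ?thesis
    using assms by (simp add: divide_right_mono)
qed

lemma eee_f_second_order_ineq:
  assumes "mu > 0" "Ts > 0" "rho > 0" "Ts \<le> b"
  shows "eee_f mu Ts rho * ((mu * Ts + 1 / rho)\<^sup>2 + (1 / rho)\<^sup>2) * (eee_f mu Ts rho + b)
           \<ge> 2 * (- eee_f mu Ts rho * (mu * Ts + 1 / rho))\<^sup>2"
proof -
  define F u v where "F = eee_f mu Ts rho" and "u = mu * Ts + 1 / rho" and "v = 1 / rho"
  have "F > 0"
    using eee_f_pos assms by (simp add: F_def)
  have "F * (u\<^sup>2 - v\<^sup>2) \<le> Ts * (u\<^sup>2 + v\<^sup>2)"
    using eee_f_mult_diff_squares_le [OF assms(1-3)] by (simp add: F_def u_def v_def)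
  also have "\<dots> \<le> b * (u\<^sup>2 + v\<^sup>2)"
    using assms by (intro mult_right_mono) auto
  finally have "F * (u\<^sup>2 - v\<^sup>2) \<le> b * (u\<^sup>2 + v\<^sup>2)" .
  have "2 * (- F * u)\<^sup>2 = F * (F * (2 * u\<^sup>2))"
    by (simp add: power2_eq_square)
  also have "\<dots> \<le> F * (F * (u\<^sup>2 + v\<^sup>2) + b * (u\<^sup>2 + v\<^sup>2))"
    using \<open>F * (u\<^sup>2 - v\<^sup>2) \<le> b * (u\<^sup>2 + v\<^sup>2)\<close> \<open>F > 0\<close>
    by (intro mult_left_mono) (auto simp: algebra_simps)
  also have "\<dots> = F * (u\<^sup>2 + v\<^sup>2) * (F + b)"
    by (simp add: algebra_simps)
  finally show ?thesis
    by (simp only: F_def u_def v_def)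
qed

lemma deriv_deriv_eqI:
  fixes f :: "real \<Rightarrow> real"
  assumes "open S" "x \<in> S"
    and "\<And>y. y \<in> S \<Longrightarrow> (f has_real_derivative f' y) (at y)"
    and "(f' has_real_derivative f'') (at x)"
  shows "deriv (deriv f) x = f''"
proof -
  have "(deriv f has_real_derivative f'') (at x)"
  proof (rule has_field_derivative_transform_within_open [OF assms(4,1,2)])
    show "f' y = deriv f y" if "y \<in> S" for y
      using assms(3) [OF that] by (simp add: DERIV_imp_deriv)
  qed
  then show ?thesis
    by (rule DERIV_imp_deriv)
qed

lemma has_real_derivative_divide_add_const:
  fixes g :: "real \<Rightarrow> real"
  assumes "(g has_real_derivative g') (at x)" "g x + b \<noteq> 0"
  shows "((\<lambda>r. g r / (g r + b)) has_real_derivative b * g' / (g x + b)\<^sup>2) (at x)"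
proof -
  have "((\<lambda>r. g r / (g r + b)) has_real_derivative
      (g' * (g x + b) - g x * g') / ((g x + b) * (g x + b))) (at x)"
    using assms by (auto intro!: derivative_eq_intros)
  then show ?thesis
    by (simp add: power2_eq_square algebra_simps)
qed

lemma has_real_derivative_divide_add_const_deriv:
  fixes g g' :: "real \<Rightarrow> real"
  assumes "(g has_real_derivative g' x) (at x)" "(g' has_real_derivative g'') (at x)"
    and "g x + b \<noteq> 0"
  shows "((\<lambda>r. b * g' r / (g r + b)\<^sup>2) has_real_derivative
           b * (g'' * (g x + b) - 2 * (g' x)\<^sup>2) / (g x + b) ^ 3) (at x)"
proof -
  have quotient_eq: "(b * g'' * X\<^sup>2 - b * g' x * (2 * X * g' x)) / (X\<^sup>2 * X\<^sup>2)
      = b * (g'' * X - 2 * (g' x)\<^sup>2) / X ^ 3" if "X \<noteq> 0" for X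
    using that by (simp add: field_simps power2_eq_square power3_eq_cube)
  have "((\<lambda>r. b * g' r / (g r + b)\<^sup>2) has_real_derivative
      (b * g'' * (g x + b)\<^sup>2 - b * g' x * (2 * (g x + b) * g' x))
        / ((g x + b)\<^sup>2 * (g x + b)\<^sup>2)) (at x)"
    using assms by (auto intro!: derivative_eq_intros)
  then show ?thesis
    by (rule DERIV_cong) (rule quotient_eq [OF assms(3)])
qed

lemma convex_on_diff_mult:
  fixes h h' h'' :: "real \<Rightarrow> real"
  assumes "convex S" "S \<subseteq> {..c}"
    and "\<And>x. x \<in> S \<Longrightarrow> (h has_real_derivative h' x) (at x)"
    and "\<And>x. x \<in> S \<Longrightarrow> (h' has_real_derivative h'' x) (at x)"
    and "\<And>x. x \<in> S \<Longrightarrow> h' x \<le> 0" "\<And>x. x \<in> S \<Longrightarrow> h'' x \<ge> 0"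
  shows "convex_on S (\<lambda>x. (c - x) * h x)"
proof (rule f''_ge0_imp_convex [OF \<open>convex S\<close>])
  fix x assume "x \<in> S"
  show "((\<lambda>x. (c - x) * h x) has_real_derivative (c - x) * h' x - h x) (at x)"
    using assms(3) [OF \<open>x \<in> S\<close>] by (auto intro!: derivative_eq_intros)
  show "((\<lambda>x. (c - x) * h' x - h x) has_real_derivative (c - x) * h'' x - 2 * h' x) (at x)"
    using assms(3,4) [OF \<open>x \<in> S\<close>] by (auto intro!: derivative_eq_intros)
  have "(c - x) * h'' x \<ge> 0"
    using assms(2,6) \<open>x \<in> S\<close> by (intro mult_nonneg_nonneg) auto
  then show "(c - x) * h'' x - 2 * h' x \<ge> 0"
    using assms(5) [OF \<open>x \<in> S\<close>] by linarith
qed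

lemma convex_on_diff_mult_divide_add_const:
  fixes g g' g'' :: "real \<Rightarrow> real"
  assumes "convex S" "S \<subseteq> {..c}" "b > 0"
    and "\<And>x. x \<in> S \<Longrightarrow> (g has_real_derivative g' x) (at x)"
    and "\<And>x. x \<in> S \<Longrightarrow> (g' has_real_derivative g'' x) (at x)"
    and "\<And>x. x \<in> S \<Longrightarrow> g x > 0" "\<And>x. x \<in> S \<Longrightarrow> g' x \<le> 0"
    and "\<And>x. x \<in> S \<Longrightarrow> g'' x * (g x + b) \<ge> 2 * (g' x)\<^sup>2"
  shows "convex_on S (\<lambda>x. (c - x) * (g x / (g x + b)))"
proof (rule convex_on_diff_mult [OF assms(1,2)])
  fix x assume "x \<in> S"
  then have "g x + b > 0"
    using assms(3,6) by (simp add: add_pos_pos)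
  then show "((\<lambda>r. g r / (g r + b)) has_real_derivative b * g' x / (g x + b)\<^sup>2) (at x)"
    and "((\<lambda>r. b * g' r / (g r + b)\<^sup>2) has_real_derivative
           b * (g'' x * (g x + b) - 2 * (g' x)\<^sup>2) / (g x + b) ^ 3) (at x)"
    using assms(4,5) \<open>x \<in> S\<close>
    by (auto intro: has_real_derivative_divide_add_const has_real_derivative_divide_add_const_deriv)
  show "b * g' x / (g x + b)\<^sup>2 \<le> 0"
    using assms(3,7) \<open>x \<in> S\<close> by (simp add: divide_nonpos_nonneg mult_nonneg_nonpos)
  show "b * (g'' x * (g x + b) - 2 * (g' x)\<^sup>2) / (g x + b) ^ 3 \<ge> 0"
    using assms(3,8) \<open>x \<in> S\<close> \<open>g x + b > 0\<close> by simp
qed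

theorem mainTheorem3:
  fixes mu Ts Tw soff :: real
  assumes "mu > 0" and "Ts > 0" and "Tw > 0" and "0 \<le> soff" and "soff < 1"
  shows "(\<forall>rho\<in>{0<..<1}.
            deriv (deriv (eee_f mu Ts)) rho * (eee_f mu Ts rho + (Ts + Tw))
              \<ge> 2 * (deriv (eee_f mu Ts) rho)\<^sup>2)
         \<and> concave_on {0<..<1} (eee_E mu Ts Tw soff)"
proof -
  define f f' f'' where "f = eee_f mu Ts"
    and "f' = (\<lambda>r. - f r * (mu * Ts + 1 / r))"
    and "f'' = (\<lambda>r. f r * ((mu * Ts + 1 / r)\<^sup>2 + (1 / r)\<^sup>2))"
  have df: "(f has_real_derivative f' r) (at r)" and df': "(f' has_real_derivative f'' r) (at r)"
    if "r > 0" for r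
    using that assms(1) eee_f_has_real_derivative eee_f_deriv_has_real_derivative
    by (simp_all add: f_def f'_def f''_def)
  have ineq: "f'' r * (f r + (Ts + Tw)) \<ge> 2 * (f' r)\<^sup>2" if "r > 0" for r
    using eee_f_second_order_ineq [OF assms(1,2) that] assms(3) by (simp add: f_def f'_def f''_def)
  have deriv_f: "deriv f r = f' r" if "r > 0" for r
    using df [OF that] by (rule DERIV_imp_deriv)
  have deriv2_f: "deriv (deriv f) r = f'' r" if "r > 0" for r
    using df df' [OF that] that by (intro deriv_deriv_eqI [where S = "{0<..}"]) auto
  have pos: "f r > 0" and decreasing: "f' r \<le> 0" if "r > 0" for r
    using eee_f_pos [OF assms(1) that, of Ts] assms(1,2) that
    by (auto simp: f_def f'_def intro!: mult_nonneg_nonneg add_nonneg_nonneg)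
  have "convex_on {0<..<1} (\<lambda>r. (1 - r) * (f r / (f r + (Ts + Tw))))"
    using assms(2,3) df df' pos decreasing ineq
    by (intro convex_on_diff_mult_divide_add_const [where g' = f' and g'' = f'']) auto
  then have "concave_on {0<..<1} (\<lambda>r. 1 - (1 - soff) * ((1 - r) * (f r / (f r + (Ts + Tw)))))"
    using assms(5) by (intro concave_on_diff convex_on_cmul) (auto simp: concave_on_const)
  moreover have "eee_E mu Ts Tw soff = (\<lambda>r. 1 - (1 - soff) * ((1 - r) * (f r / (f r + (Ts + Tw)))))"
    by (simp add: fun_eq_iff eee_E_def f_def add.assoc)
  ultimately have "concave_on {0<..<1} (eee_E mu Ts Tw soff)"
    by simp
  moreover have "deriv (deriv (eee_f mu Ts)) r * (eee_f mu Ts r + (Ts + Tw))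
      \<ge> 2 * (deriv (eee_f mu Ts) r)\<^sup>2" if "r \<in> {0<..<1}" for r
    using ineq deriv_f deriv2_f that by (simp add: f_def)
  ultimately show ?thesis
    by blast
qed

end
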